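(* For natural concepts $C_1,C_2,D_1,D_2$: $\{C_1:C_2::D_1:D_2\}\models C_2:C_1::D_2:D_1$, i.e. every model of the TBox consisting of the analogy assertion $C_1:C_2::D_1:D_2$ satisfies the analogy assertion $C_2:C_1::D_2:D_1$.
   Context: Concepts: $C,D::=\top\mid\bot\mid A\mid C\sqcap D\mid \exists r.C\mid N$; natural concepts: $N,N'::=A'\mid N\sqcap N'\mid N\bowtie N'\mid \exists r'.N$, with $A$ a concept name, $A'$ a natural concept name, $r$ a role name, $r'$ an intra-domain role name. A domain constrained interpretation is $\mathfrak{I}=(\mathcal{I},[\mathcal{F}_1,\dots,\mathcal{F}_k],\mathcal{X},\pi,\sim,\mathcal{S})$ where $\mathcal{I}=(\Delta^{\mathcal{I}},\cdot^{\mathcal{I}})$ is a classical DL interpretation, $[\mathcal{F}_1,\dots,\mathcal{F}_k]$ partitions a nonempty finite set $\mathcal{F}$, $\mathcal{X}\subseteq2^{\mathcal{F}}$ with $\mathcal{F}\in\mathcal{X}$, $\pi:\Delta^{\mathcal{I}}\to2^{\mathcal{F}}$, $\sim$ an equivalence relation on $\{1,\dots,k\}$, $\mathcal{S}=\{\sigma_{(s,t)}\mid(s,t)\in\sim\}$ with $\sigma_{(s,t)}:\mathcal{F}_s\to\mathcal{F}_t$ bijections. With $\mathcal{C}=\{G\subseteq\mathcal{F}\mid X\not\subseteq G\ \forall X\in\mathcal{X}\}$ and $\mathcal{C}^i=\{G\in\mathcal{C}\mid G\subseteq\mathcal{F}_i\}$ it is required: (1) $X\not\subseteq\pi(d)$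 for all $d$, $X\in\mathcal{X}$; (2) each $G\in\mathcal{C}$ is $\pi(d)$ for some $d$; (3) $\sigma_{(s,t)}^{-1}=\sigma_{(t,s)}$, $\sigma_{(t,u)}\circ\sigma_{(s,t)}=\sigma_{(s,u)}$; (4) $\sigma_{(i,j)}(G)\in\mathcal{C}$ for $G\in\mathcal{C}^i$, $(i,j)\in\sim$; (5) $\{f,g\}\in\mathcal{X}$ whenever $f\in\mathcal{F}_i$, $g\in\mathcal{F}_j$, $(i,j)\in\sim$, $i\neq j$. $\varphi(C)=\bigcap\{\pi(d)\mid d\in C^{\mathcal{I}}\}$ ($=\mathcal{F}$ if $C^{\mathcal{I}}=\emptyset$). Concepts are interpreted as usual, with $(N\bowtie N')^{\mathcal{I}}=\{d\mid\varphi(N)\cap\varphi(N')\subseteq\pi(d)\}$. An intra-domain relation $r$: there is $\kappa_r:2^{\mathcal{F}}\to2^{\mathcal{F}}$ with $(\exists r.C)^{\mathcal{I}}=\{d\mid\kappa_r(\varphi(C))\subseteq\pi(d)\}$ for all $C$, $\kappa_r(G)=\bigcup_i\kappa_r(G\cap\mathcal{F}_i)$ for $G\in\mathcal{C}$, $\kappa_r(G)\subseteq\mathcal{F}_i$ for $G\in\mathcal{C}^i$, $\kappa_r(\sigma_{(i,j)}(G))=\sigma_{(i,j)}(\kappa_r(G))$ for $(i,j)\in\sim$, $G\in\mathcal{C}^i$, and $\kappa_r(G)\neq\emptyset$ for $G\in\mathcal{C}^i\setminus\{\emptyset\}$. $\delta(C)=\{i\mid\mathcal{F}_i\cap\varphi(C)\neq\emptyset\}$.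 For $U=\{(s_1,t_1),\dots,(s_l,t_l)\}\subseteq\sim$ with pairwise distinct $s_i$ and pairwise distinct $t_i$, the domain translation $\sigma_U:\mathcal{F}\to\mathcal{F}$ maps $f\in\mathcal{F}_{s_i}$ to $\sigma_{(s_i,t_i)}(f)$ and fixes all other features; $\mathrm{src}(U)=\{s_i\}$, $\mathrm{tgt}(U)=\{t_i\}$. $\mu(C,D)$ is the set of $\sigma_U$ with $\varphi(D)=\sigma_U(\varphi(C))$, $\mathrm{src}(U)\subseteq\delta(C)$, $\mathrm{tgt}(U)\cap(\delta(C)\setminus\mathrm{src}(U))=\emptyset$. An analogy assertion $C_1:C_2::D_1:D_2$ (between natural concepts) is satisfied in $\mathfrak{I}$ iff $\mu(C_1,C_2)\cap\mu(D_1,D_2)\neq\emptyset$; a concept inclusion $C\sqsubseteq D$ is satisfied iff $C^{\mathcal{I}}\subseteq D^{\mathcal{I}}$. A TBox is a finite set of concept inclusions and analogy assertions. $\mathfrak{I}$ is a model of a TBox $\mathcal{T}$ if it satisfies all its elements, every natural concept $N$ in $\mathcal{T}$ satisfies $N^{\mathcal{I}}=\{d\mid\varphi(N)\subseteq\pi(d)\}$, and every intra-domain role name is interpreted as an intra-domain relation. $\mathcal{T}\models\psi$ means every model of $\mathcal{T}$ satisfies $\psi$. *)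

theory Defs
  imports Main
begin

text \<open>Concepts over concept names 'c and role names 'r. The constructor Join is the
  operator written with bowtie; it is only well-formed between natural concepts.\<close>

datatype ('c, 'r) concept =
    Top | Bot | CN 'c
  | Conj "('c, 'r) concept" "('c, 'r) concept"
  | Ex 'r "('c, 'r) concept"
  | Join "('c, 'r) concept" "('c, 'r) concept"

inductive natural :: "'c set \<Rightarrow> 'r set \<Rightarrow> ('c, 'r) concept \<Rightarrow> bool"
  for NN :: "'c set" and IR :: "'r set" where
  nat_name: "A \<in> NN \<Longrightarrow> natural NN IR (CN A)"
| nat_conj: "natural NN IR N \<Longrightarrow> natural NN IR N' \<Longrightarrow> natural NN IR (Conj N N')"
| nat_join: "natural NN IR N \<Longrightarrow> natural NN IR N' \<Longrightarrow> natural NN IR (Join N N')"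
| nat_ex: "r \<in> IR \<Longrightarrow> natural NN IR N \<Longrightarrow> natural NN IR (Ex r N)"

fun subconcepts :: "('c, 'r) concept \<Rightarrow> ('c, 'r) concept set" where
  "subconcepts Top = {Top}"
| "subconcepts Bot = {Bot}"
| "subconcepts (CN A) = {CN A}"
| "subconcepts (Conj C D) = insert (Conj C D) (subconcepts C \<union> subconcepts D)"
| "subconcepts (Ex r C) = insert (Ex r C) (subconcepts C)"
| "subconcepts (Join C D) = insert (Join C D) (subconcepts C \<union> subconcepts D)"

datatype ('c, 'r) axiom =
    Incl "('c, 'r) concept" "('c, 'r) concept"
  | Analogy "('c, 'r) concept" "('c, 'r) concept" "('c, 'r) concept" "('c, 'r) concept"

fun ax_concepts :: "('c, 'r) axiom \<Rightarrow> ('c, 'r) concept set" where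
  "ax_concepts (Incl C D) = subconcepts C \<union> subconcepts D"
| "ax_concepts (Analogy C1 C2 D1 D2) =
     subconcepts C1 \<union> subconcepts C2 \<union> subconcepts D1 \<union> subconcepts D2"

text \<open>Domain indices are 1..k; part i is the feature set F_i; sigma s t is the
  bijection sigma_(s,t) : F_s -> F_t.\<close>

record ('d, 'c, 'r, 'f) dci =
  Delta :: "'d set"
  cI :: "'c \<Rightarrow> 'd set"
  rI :: "'r \<Rightarrow> ('d \<times> 'd) set"
  Feat :: "'f set"
  k :: nat
  part :: "nat \<Rightarrow> 'f set"
  Xc :: "'f set set"
  pi :: "'d \<Rightarrow> 'f set"
  sim :: "(nat \<times> nat) set"
  sigma :: "nat \<Rightarrow> nat \<Rightarrow> 'f \<Rightarrow> 'f"

definition consistent :: "('d, 'c, 'r, 'f) dci \<Rightarrow> 'f set set" where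
  "consistent I = {G. G \<subseteq> Feat I \<and> (\<forall>X\<in>Xc I. \<not> X \<subseteq> G)}"

definition consistent_in :: "('d, 'c, 'r, 'f) dci \<Rightarrow> nat \<Rightarrow> 'f set set" where
  "consistent_in I i = {G \<in> consistent I. G \<subseteq> part I i}"

definition is_dci :: "('d, 'c, 'r, 'f) dci \<Rightarrow> bool" where
  "is_dci I \<longleftrightarrow>
     \<comment> \<open>classical interpretation\<close>
     Delta I \<noteq> {} \<and> (\<forall>A. cI I A \<subseteq> Delta I) \<and> (\<forall>r. rI I r \<subseteq> Delta I \<times> Delta I) \<and>
     \<comment> \<open>[F_1,...,F_k] partitions a nonempty finite set F\<close>
     finite (Feat I) \<and> Feat I \<noteq> {} \<and>
     (\<forall>i\<in>{1..k I}. part I i \<noteq> {}) \<and>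
     (\<forall>i\<in>{1..k I}. \<forall>j\<in>{1..k I}. i \<noteq> j \<longrightarrow> part I i \<inter> part I j = {}) \<and>
     (\<Union>i\<in>{1..k I}. part I i) = Feat I \<and>
     \<comment> \<open>X is a subset of 2^F containing F\<close>
     (\<forall>X\<in>Xc I. X \<subseteq> Feat I) \<and> Feat I \<in> Xc I \<and>
     \<comment> \<open>pi maps into 2^F\<close>
     (\<forall>d\<in>Delta I. pi I d \<subseteq> Feat I) \<and>
     \<comment> \<open>sim is an equivalence relation on 1..k\<close>
     equiv {1..k I} (sim I) \<and>
     \<comment> \<open>the sigma are bijections F_s -> F_t\<close>
     (\<forall>(s,t)\<in>sim I. bij_betw (sigma I s t) (part I s) (part I t)) \<and>
     \<comment> \<open>(1)\<close>
     (\<forall>d\<in>Delta I. \<forall>X\<in>Xc I. \<not> X \<subseteq> pi I d) \<and>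
     \<comment> \<open>(2)\<close>
     (\<forall>G\<in>consistent I. \<exists>d\<in>Delta I. pi I d = G) \<and>
     \<comment> \<open>(3)\<close>
     (\<forall>(s,t)\<in>sim I. \<forall>f\<in>part I s. sigma I t s (sigma I s t f) = f) \<and>
     (\<forall>s t u. (s,t) \<in> sim I \<longrightarrow> (t,u) \<in> sim I \<longrightarrow>
        (\<forall>f\<in>part I s. sigma I t u (sigma I s t f) = sigma I s u f)) \<and>
     \<comment> \<open>(4)\<close>
     (\<forall>(i,j)\<in>sim I. \<forall>G\<in>consistent_in I i. sigma I i j ` G \<in> consistent I) \<and>
     \<comment> \<open>(5)\<close>
     (\<forall>(i,j)\<in>sim I. i \<noteq> j \<longrightarrow>
        (\<forall>f\<in>part I i. \<forall>g\<in>part I j. {f, g} \<in> Xc I))"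

fun ext :: "('d, 'c, 'r, 'f) dci \<Rightarrow> ('c, 'r) concept \<Rightarrow> 'd set" where
  "ext I Top = Delta I"
| "ext I Bot = {}"
| "ext I (CN A) = cI I A"
| "ext I (Conj C D) = ext I C \<inter> ext I D"
| "ext I (Ex r C) = {d \<in> Delta I. \<exists>e. (d, e) \<in> rI I r \<and> e \<in> ext I C}"
| "ext I (Join N N') =
     {d \<in> Delta I. (Feat I \<inter> \<Inter>(pi I ` ext I N)) \<inter> (Feat I \<inter> \<Inter>(pi I ` ext I N'))
                    \<subseteq> pi I d}"

definition phi :: "('d, 'c, 'r, 'f) dci \<Rightarrow> ('c, 'r) concept \<Rightarrow> 'f set" where
  "phi I C = Feat I \<inter> \<Inter>(pi I ` ext I C)"

definition intra_domain :: "('d, 'c, 'r, 'f) dci \<Rightarrow> 'r \<Rightarrow> bool" where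
  "intra_domain I r \<longleftrightarrow> (\<exists>\<kappa> :: 'f set \<Rightarrow> 'f set.
     (\<forall>C. ext I (Ex r C) = {d \<in> Delta I. \<kappa> (phi I C) \<subseteq> pi I d}) \<and>
     (\<forall>G\<in>consistent I. \<kappa> G = (\<Union>i\<in>{1..k I}. \<kappa> (G \<inter> part I i))) \<and>
     (\<forall>i\<in>{1..k I}. \<forall>G\<in>consistent_in I i. \<kappa> G \<subseteq> part I i) \<and>
     (\<forall>(i,j)\<in>sim I. \<forall>G\<in>consistent_in I i. \<kappa> (sigma I i j ` G) = sigma I i j ` \<kappa> G) \<and>
     (\<forall>i\<in>{1..k I}. \<forall>G\<in>consistent_in I i - {{}}. \<kappa> G \<noteq> {}))"

definition delta :: "('d, 'c, 'r, 'f) dci \<Rightarrow> ('c, 'r) concept \<Rightarrow> nat set" where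
  "delta I C = {i \<in> {1..k I}. part I i \<inter> phi I C \<noteq> {}}"

definition admissible_U :: "('d, 'c, 'r, 'f) dci \<Rightarrow> (nat \<times> nat) set \<Rightarrow> bool" where
  "admissible_U I U \<longleftrightarrow> U \<subseteq> sim I \<and> inj_on fst U \<and> inj_on snd U"

definition sigmaU :: "('d, 'c, 'r, 'f) dci \<Rightarrow> (nat \<times> nat) set \<Rightarrow> 'f \<Rightarrow> 'f" where
  "sigmaU I U f =
     (if \<exists>p\<in>U. f \<in> part I (fst p)
      then (let p = (SOME p. p \<in> U \<and> f \<in> part I (fst p)) in sigma I (fst p) (snd p) f)
      else f)"

definition mu :: "('d, 'c, 'r, 'f) dci \<Rightarrow> ('c, 'r) concept \<Rightarrow> ('c, 'r) concept
                   \<Rightarrow> ('f \<Rightarrow> 'f) set" where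
  "mu I C D = {sigmaU I U | U. admissible_U I U \<and>
       phi I D = sigmaU I U ` phi I C \<and>
       fst ` U \<subseteq> delta I C \<and>
       snd ` U \<inter> (delta I C - fst ` U) = {}}"

fun sat_ax :: "('d, 'c, 'r, 'f) dci \<Rightarrow> ('c, 'r) axiom \<Rightarrow> bool" where
  "sat_ax I (Incl C D) \<longleftrightarrow> ext I C \<subseteq> ext I D"
| "sat_ax I (Analogy C1 C2 D1 D2) \<longleftrightarrow> mu I C1 C2 \<inter> mu I D1 D2 \<noteq> {}"

definition is_model ::
  "'c set \<Rightarrow> 'r set \<Rightarrow> ('d, 'c, 'r, 'f) dci \<Rightarrow> ('c, 'r) axiom set \<Rightarrow> bool" where
  "is_model NN IR I T \<longleftrightarrow>
     is_dci I \<and>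
     (\<forall>ax\<in>T. sat_ax I ax) \<and>
     (\<forall>ax\<in>T. \<forall>N\<in>ax_concepts ax. natural NN IR N \<longrightarrow>
        ext I N = {d \<in> Delta I. phi I N \<subseteq> pi I d}) \<and>
     (\<forall>r\<in>IR. intra_domain I r)"

end

theory Submission
  imports Defs
begin

text \<open>If the translation sigma_U witnesses C1:C2 and D1:D2, then the translation along
  the converse of U witnesses C2:C1 and D2:D1: the condition on the targets of U makes the
  converse translation undo sigma_U on phi(C1), and the condition on the sources of U
  transfers to its converse. The only subtlety is that the common witness may arise from
  two different index sets U and V. But since the parts are nonempty and disjoint, sigma_U
  determines all pairs (s,t) in U with s \<noteq> t, while pairs (s,s) act as the identity,
  so the converses of U and V yield the same translation.\<close>

definition domains_of :: "('d, 'c, 'r, 'f) dci \<Rightarrow> 'f set \<Rightarrow> nat set" where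
  "domains_of I A = {i \<in> {1..k I}. part I i \<inter> A \<noteq> {}}"

lemma delta_eq_domains_of: "delta I C = domains_of I (phi I C)"
  unfolding delta_def domains_of_def by simp

context
  fixes I :: "('d, 'c, 'r, 'f) dci"
  assumes dci: "is_dci I"
begin

lemma sim_range:
  assumes "(s, t) \<in> sim I"
  shows "s \<in> {1..k I}" "t \<in> {1..k I}" "(t, s) \<in> sim I"
proof -
  have "equiv {1..k I} (sim I)"
    using dci unfolding is_dci_def by (elim conjE) assumption
  then show "s \<in> {1..k I}" "t \<in> {1..k I}" "(t, s) \<in> sim I"
    using assms unfolding equiv_def refl_on_def sym_def by blast+
qed

lemma part_nonempty:
  assumes "i \<in> {1..k I}"
  shows "part I i \<noteq> {}"
proof -
  have "\<forall>i\<in>{1..k I}. part I i \<noteq> {}"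
    using dci unfolding is_dci_def by (elim conjE) assumption
  with assms show ?thesis by blast
qed

lemma part_unique:
  assumes "i \<in> {1..k I}" "j \<in> {1..k I}" "f \<in> part I i" "f \<in> part I j"
  shows "i = j"
proof -
  have "\<forall>i\<in>{1..k I}. \<forall>j\<in>{1..k I}. i \<noteq> j \<longrightarrow> part I i \<inter> part I j = {}"
    using dci unfolding is_dci_def by (elim conjE) assumption
  with assms show ?thesis by blast
qed

lemma sigma_in_part:
  assumes "(s, t) \<in> sim I" "f \<in> part I s"
  shows "sigma I s t f \<in> part I t"
proof -
  have "\<forall>(s, t)\<in>sim I. bij_betw (sigma I s t) (part I s) (part I t)"
    using dci unfolding is_dci_def by (elim conjE) assumption
  with assms show ?thesis by (blast intro: bij_betw_apply)
qed

lemma sigma_inverse: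
  assumes "(s, t) \<in> sim I" "f \<in> part I s"
  shows "sigma I t s (sigma I s t f) = f"
proof -
  have "\<forall>(s, t)\<in>sim I. \<forall>f\<in>part I s. sigma I t s (sigma I s t f) = f"
    using dci unfolding is_dci_def by (elim conjE) assumption
  with assms show ?thesis by blast
qed

lemma sigma_trans:
  assumes "(s, t) \<in> sim I" "(t, u) \<in> sim I" "f \<in> part I s"
  shows "sigma I t u (sigma I s t f) = sigma I s u f"
proof -
  have "\<forall>s t u. (s, t) \<in> sim I \<longrightarrow> (t, u) \<in> sim I \<longrightarrow>
      (\<forall>f\<in>part I s. sigma I t u (sigma I s t f) = sigma I s u f)"
    using dci unfolding is_dci_def by (elim conjE) assumption
  with assms show ?thesis by blast
qed

lemma sigma_self:
  assumes "(s, s) \<in> sim I" "f \<in> part I s"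
  shows "sigma I s s f = f"
  using sigma_trans[OF assms(1,1,2)] sigma_inverse[OF assms] by simp

lemma admissible_U_sim: "admissible_U I U \<Longrightarrow> (s, t) \<in> U \<Longrightarrow> (s, t) \<in> sim I"
  unfolding admissible_U_def by blast

lemma admissible_U_converse:
  assumes "admissible_U I U"
  shows "admissible_U I (converse U)"
  unfolding admissible_U_def
proof (intro conjI)
  show "converse U \<subseteq> sim I"
    using assms sim_range(3) unfolding admissible_U_def by blast
  show "inj_on fst (converse U)" "inj_on snd (converse U)"
    using assms unfolding admissible_U_def inj_on_def by fastforce+
qed

lemma admissible_U_minus_Id: "admissible_U I U \<Longrightarrow> admissible_U I (U - Id)"
  unfolding admissible_U_def by (auto intro: inj_on_subset)

lemma admissible_U_source_unique:
  assumes U: "admissible_U I U" and st: "(s, t) \<in> U" "f \<in> part I s"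
    and p: "p \<in> U" "f \<in> part I (fst p)"
  shows "p = (s, t)"
proof -
  obtain s' t' where p_eq: "p = (s', t')" by fastforce
  have "s' \<in> {1..k I}" "s \<in> {1..k I}"
    using sim_range(1) admissible_U_sim[OF U] st(1) p(1) unfolding p_eq by blast+
  then have "s' = s"
    using part_unique[of s' s f] st(2) p(2) unfolding p_eq by simp
  with U st p show ?thesis
    unfolding p_eq admissible_U_def inj_on_def by force
qed

lemma sigmaU_apply:
  assumes U: "admissible_U I U" and st: "(s, t) \<in> U" "f \<in> part I s"
  shows "sigmaU I U f = sigma I s t f"
proof -
  have some_pair: "(SOME p. p \<in> U \<and> f \<in> part I (fst p)) = (s, t)"
  proof (rule some_equality)
    show "(s, t) \<in> U \<and> f \<in> part I (fst (s, t))"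
      using st by simp
    show "p = (s, t)" if "p \<in> U \<and> f \<in> part I (fst p)" for p
      using that admissible_U_source_unique[OF U st] by blast
  qed
  have "\<exists>p\<in>U. f \<in> part I (fst p)"
    using st by force
  then show ?thesis
    unfolding sigmaU_def some_pair by simp
qed

lemma sigmaU_outside: "(\<And>p. p \<in> U \<Longrightarrow> f \<notin> part I (fst p)) \<Longrightarrow> sigmaU I U f = f"
  unfolding sigmaU_def by auto

lemma sigmaU_cases:
  assumes U: "admissible_U I U"
  obtains s t where "(s, t) \<in> U" "f \<in> part I s" "sigmaU I U f = sigma I s t f"
      "sigma I s t f \<in> part I t"
    | "\<And>p. p \<in> U \<Longrightarrow> f \<notin> part I (fst p)" "sigmaU I U f = f"
proof (cases "\<exists>s t. (s, t) \<in> U \<and> f \<in> part I s")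
  case True
  then obtain s t where "(s, t) \<in> U" "f \<in> part I s" by blast
  then show ?thesis
    using that(1) sigmaU_apply[OF U] sigma_in_part admissible_U_sim[OF U] by blast
next
  case False
  then have "\<And>p. p \<in> U \<Longrightarrow> f \<notin> part I (fst p)" by force
  then show ?thesis
    using that(2) sigmaU_outside by blast
qed

lemma sigmaU_minus_Id:
  assumes U: "admissible_U I U"
  shows "sigmaU I (U - Id) = sigmaU I U"
proof
  fix f
  show "sigmaU I (U - Id) f = sigmaU I U f"
  proof (cases rule: sigmaU_cases[OF U, of f])
    case (1 s t)
    show ?thesis
    proof (cases "s = t")
      case True
      have "sigmaU I U f = f"
        using 1 True sigma_self admissible_U_sim[OF U] by simp
      moreover have "sigmaU I (U - Id) f = f"
        using admissible_U_source_unique[OF U 1(1,2)] True by (intro sigmaU_outside) blast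
      ultimately show ?thesis by simp
    next
      case False
      with 1 show ?thesis
        using sigmaU_apply[OF admissible_U_minus_Id[OF U]] by simp
    qed
  next
    case 2
    then have "sigmaU I (U - Id) f = f"
      by (intro sigmaU_outside) blast
    with 2 show ?thesis by simp
  qed
qed

lemma sigmaU_converse_sigmaU:
  assumes U: "admissible_U I U" and f: "f \<in> A"
    and tgt: "snd ` U \<inter> (domains_of I A - fst ` U) = {}"
  shows "sigmaU I (converse U) (sigmaU I U f) = f"
proof (cases rule: sigmaU_cases[OF U, of f])
  case (1 s t)
  then have "sigmaU I (converse U) (sigmaU I U f) = sigma I t s (sigma I s t f)"
    using sigmaU_apply[OF admissible_U_converse[OF U], of t s] by simp
  also have "\<dots> = f"
    using sigma_inverse admissible_U_sim[OF U] 1(1,2) by blast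
  finally show ?thesis .
next
  case 2
  have "f \<notin> part I t" if "(s, t) \<in> U" for s t
  proof
    assume "f \<in> part I t"
    moreover have "t \<in> {1..k I}"
      using sim_range(2) admissible_U_sim[OF U that] by blast
    ultimately have "t \<in> domains_of I A"
      using f unfolding domains_of_def by blast
    moreover have "t \<notin> fst ` U"
      using 2(1) \<open>f \<in> part I t\<close> by force
    ultimately show False
      using tgt that by force
  qed
  then have "sigmaU I (converse U) f = f"
    by (intro sigmaU_outside) auto
  with 2(2) show ?thesis by simp
qed

lemma image_sigmaU_converse:
  assumes "admissible_U I U" "snd ` U \<inter> (domains_of I A - fst ` U) = {}"
  shows "sigmaU I (converse U) ` sigmaU I U ` A = A"
  using sigmaU_converse_sigmaU[OF assms(1) _ assms(2)] by (force simp: image_image)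

lemma converse_sources_in_domains_of_image:
  assumes U: "admissible_U I U" and src: "fst ` U \<subseteq> domains_of I A"
  shows "fst ` converse U \<subseteq> domains_of I (sigmaU I U ` A)"
proof
  fix t
  assume "t \<in> fst ` converse U"
  then obtain s where st: "(s, t) \<in> U" by force
  then have "s \<in> domains_of I A"
    using src by force
  then obtain f where f: "f \<in> part I s" "f \<in> A"
    unfolding domains_of_def by blast
  have "sigmaU I U f \<in> part I t"
    using sigmaU_apply[OF U st f(1)] sigma_in_part admissible_U_sim[OF U st] f(1) by simp
  moreover have "t \<in> {1..k I}"
    using sim_range(2) admissible_U_sim[OF U st] by blast
  ultimately show "t \<in> domains_of I (sigmaU I U ` A)"
    using f(2) unfolding domains_of_def by blast
qed

text \<open>No hypothesis on A is needed here: a source of U that meets the image must also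
  be a target of U, because sigma_U maps every feature of a source part into the matching
  target part.\<close>

lemma converse_targets_disjoint_domains_of_image:
  assumes U: "admissible_U I U"
  shows "snd ` converse U \<inter> (domains_of I (sigmaU I U ` A) - fst ` converse U) = {}"
proof (rule ccontr)
  assume "\<not> ?thesis"
  then obtain s where s: "s \<in> fst ` U" "s \<in> domains_of I (sigmaU I U ` A)" "s \<notin> snd ` U"
    by force
  then obtain f where f: "sigmaU I U f \<in> part I s" and s_range: "s \<in> {1..k I}"
    unfolding domains_of_def by blast
  show False
  proof (cases rule: sigmaU_cases[OF U, of f])
    case (1 s' t')
    have "t' \<in> {1..k I}"
      using sim_range(2) admissible_U_sim[OF U 1(1)] by blast
    then have "s = t'"
      using part_unique[of s t' "sigmaU I U f"] s_range f 1(3,4) by simp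
    with s(3) 1(1) show False by force
  next
    case 2
    with f s(1) show False by force
  qed
qed

lemma sigmaU_converse_in_mu:
  assumes U: "admissible_U I U" and D: "phi I D = sigmaU I U ` phi I C"
    and src: "fst ` U \<subseteq> delta I C" and tgt: "snd ` U \<inter> (delta I C - fst ` U) = {}"
  shows "sigmaU I (converse U) \<in> mu I D C"
proof -
  have "admissible_U I (converse U)"
    using admissible_U_converse[OF U] .
  moreover have "phi I C = sigmaU I (converse U) ` phi I D"
    using image_sigmaU_converse[OF U] tgt unfolding D delta_eq_domains_of by simp
  moreover have "fst ` converse U \<subseteq> delta I D"
    using converse_sources_in_domains_of_image[OF U] src unfolding D delta_eq_domains_of by simp
  moreover have "snd ` converse U \<inter> (delta I D - fst ` converse U) = {}"
    using converse_targets_disjoint_domains_of_image[OF U] unfolding D delta_eq_domains_of .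
  ultimately show ?thesis
    unfolding mu_def by blast
qed

lemma sigmaU_determines_pair:
  assumes U: "admissible_U I U" and V: "admissible_U I V"
    and eq: "sigmaU I U = sigmaU I V" and st: "(s, t) \<in> U" and "s \<noteq> t"
  shows "(s, t) \<in> V"
proof -
  have range: "s \<in> {1..k I}" "t \<in> {1..k I}"
    using sim_range admissible_U_sim[OF U st] by blast+
  then obtain f where f: "f \<in> part I s"
    using part_nonempty by blast
  have image: "sigmaU I V f \<in> part I t"
    using sigmaU_apply[OF U st f] sigma_in_part[OF admissible_U_sim[OF U st] f] eq by simp
  show ?thesis
  proof (cases rule: sigmaU_cases[OF V, of f])
    case (1 s' t')
    have "s' \<in> {1..k I}" "t' \<in> {1..k I}"
      using sim_range admissible_U_sim[OF V 1(1)] by blast+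
    then have "s' = s" "t' = t"
      using part_unique[of s' s f] part_unique[of t' t "sigmaU I V f"] range f image 1(2-4)
      by simp_all
    with 1(1) show ?thesis by simp
  next
    case 2
    then have "s = t"
      using part_unique[of s t f] range f image by simp
    with \<open>s \<noteq> t\<close> show ?thesis by simp
  qed
qed

lemma sigmaU_converse_cong:
  assumes U: "admissible_U I U" and V: "admissible_U I V" and eq: "sigmaU I U = sigmaU I V"
  shows "sigmaU I (converse U) = sigmaU I (converse V)"
proof -
  have "U - Id = V - Id"
    using sigmaU_determines_pair[OF U V eq] sigmaU_determines_pair[OF V U eq[symmetric]] by auto
  then have "converse U - Id = converse V - Id"
    by auto
  then show ?thesis
    using sigmaU_minus_Id admissible_U_converse U V by metis
qed

end

theorem proposition5:
  fixes NN :: "'c set" and IR :: "'r set"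
    and I :: "('d, 'c, 'r, 'f) dci"
    and C1 C2 D1 D2 :: "('c, 'r) concept"
  assumes "natural NN IR C1" "natural NN IR C2" "natural NN IR D1" "natural NN IR D2"
    and "is_model NN IR I {Analogy C1 C2 D1 D2}"
  shows "sat_ax I (Analogy C2 C1 D2 D1)"
proof -
  have dci: "is_dci I" and "mu I C1 C2 \<inter> mu I D1 D2 \<noteq> {}"
    using assms(5) unfolding is_model_def by auto
  then obtain h where h: "h \<in> mu I C1 C2" "h \<in> mu I D1 D2"
    by blast
  obtain U where
    U: "h = sigmaU I U" "admissible_U I U" "phi I C2 = sigmaU I U ` phi I C1"
      "fst ` U \<subseteq> delta I C1" "snd ` U \<inter> (delta I C1 - fst ` U) = {}"
    using h(1) unfolding mu_def by blast
  obtain V where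
    V: "h = sigmaU I V" "admissible_U I V" "phi I D2 = sigmaU I V ` phi I D1"
      "fst ` V \<subseteq> delta I D1" "snd ` V \<inter> (delta I D1 - fst ` V) = {}"
    using h(2) unfolding mu_def by blast
  have "sigmaU I (converse U) \<in> mu I C2 C1"
    using sigmaU_converse_in_mu[OF dci U(2-5)] .
  moreover have "sigmaU I (converse V) \<in> mu I D2 D1"
    using sigmaU_converse_in_mu[OF dci V(2-5)] .
  moreover have "sigmaU I (converse U) = sigmaU I (converse V)"
    using sigmaU_converse_cong[OF dci U(2) V(2)] U(1) V(1) by simp
  ultimately show ?thesis by auto
qed

end
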